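(* Let $n\ge1$ and $\mathcal{A},\mathcal{B}\subseteq D_n$. Suppose either ($I_0A_+=A_+$ and $I_0B_+=B_+$) or ($I_0A_-=A_-$ and $I_0B_-=B_-$). Then $\mathcal{A}$ and $\mathcal{B}$ are right-homometric if and only if they are left-homometric.
   Context: $D_n$ is the set of pairs $(k,\epsilon)$, $k\in\mathbb{Z}_n$, $\epsilon\in\{1,-1\}$, with multiplication $(k,\epsilon)(l,\eta)=(k+\epsilon l,\epsilon\eta)$. Right interval ${}^r\mathbf{int}(x,y)=x^{-1}y$, left interval ${}^l\mathbf{int}(x,y)=yx^{-1}$; ${}^{r}\mathbf{iv}(\mathcal{A})(g)=\#\{(x,y)\in\mathcal{A}^2:{}^r\mathbf{int}(x,y)=g\}$, similarly ${}^l\mathbf{iv}$; right-/left-homometric means equal ${}^r\mathbf{iv}$ / ${}^l\mathbf{iv}$. $A_+=\{k:(k,1)\in\mathcal{A}\}$, $A_-=\{k:(k,-1)\in\mathcal{A}\}$, similarly $B_\pm$. For $A\subseteq\mathbb{Z}_n$, $I_0A=\{-a:a\in A\}$. *)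

theory Defs
  imports Main
begin

text \<open>The dihedral group D_n: pairs (k, e) with k in Z_n (represented by 0..n-1)
  and e in {1, -1}; product (k,e)(l,h) = (k + e l mod n, e h).\<close>

definition Dn :: "nat \<Rightarrow> (int \<times> int) set" where
  "Dn n = {0..<int n} \<times> {1, -1}"

definition dmult :: "nat \<Rightarrow> int \<times> int \<Rightarrow> int \<times> int \<Rightarrow> int \<times> int" where
  "dmult n x y = ((fst x + snd x * fst y) mod int n, snd x * snd y)"

definition dinv :: "nat \<Rightarrow> int \<times> int \<Rightarrow> int \<times> int" where
  "dinv n x = ((- (snd x * fst x)) mod int n, snd x)"

definition rint :: "nat \<Rightarrow> int \<times> int \<Rightarrow> int \<times> int \<Rightarrow> int \<times> int" where
  "rint n x y = dmult n (dinv n x) y"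

definition lint :: "nat \<Rightarrow> int \<times> int \<Rightarrow> int \<times> int \<Rightarrow> int \<times> int" where
  "lint n x y = dmult n y (dinv n x)"

definition riv :: "nat \<Rightarrow> (int \<times> int) set \<Rightarrow> int \<times> int \<Rightarrow> nat" where
  "riv n A g = card {(x, y). x \<in> A \<and> y \<in> A \<and> rint n x y = g}"

definition liv :: "nat \<Rightarrow> (int \<times> int) set \<Rightarrow> int \<times> int \<Rightarrow> nat" where
  "liv n A g = card {(x, y). x \<in> A \<and> y \<in> A \<and> lint n x y = g}"

definition right_homometric :: "nat \<Rightarrow> (int \<times> int) set \<Rightarrow> (int \<times> int) set \<Rightarrow> bool" where
  "right_homometric n A B \<longleftrightarrow> riv n A = riv n B"

definition left_homometric :: "nat \<Rightarrow> (int \<times> int) set \<Rightarrow> (int \<times> int) set \<Rightarrow> bool" where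
  "left_homometric n A B \<longleftrightarrow> liv n A = liv n B"

definition plus_part :: "(int \<times> int) set \<Rightarrow> int set" where
  "plus_part A = {k. (k, 1) \<in> A}"

definition minus_part :: "(int \<times> int) set \<Rightarrow> int set" where
  "minus_part A = {k. (k, -1) \<in> A}"

definition I0 :: "nat \<Rightarrow> int set \<Rightarrow> int set" where
  "I0 n A = (\<lambda>a. (- a) mod int n) ` A"

end

theory Submission
  imports Defs
begin

text \<open>An anti-automorphism \<theta> of D_n turns right intervals into left intervals:
  \<theta>(x\<inverse> y) = \<theta>(y) \<theta>(x)\<inverse>. If \<theta> is moreover an involution with \<theta>(A) = A, then
  (x, y) \<mapsto> (\<theta> x, \<theta> y) is a bijection of A \<times> A carrying the pairs with right interval g
  onto those with left interval \<theta> g; as \<theta> permutes D_n, equality of right interval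
  vectors becomes equivalent to equality of left ones. Inversion is such an involution, and
  it preserves A exactly when I0 A_+ = A_+; conjugating inversion by a reflection gives
  another, which preserves A exactly when I0 A_- = A_-.\<close>

lemma mem_Dn_iff: "x \<in> Dn n \<longleftrightarrow> 0 \<le> fst x \<and> fst x < int n \<and> (snd x = 1 \<or> snd x = -1)"
  by (cases x) (auto simp: Dn_def)

lemma rint_in_Dn: "x \<in> Dn n \<Longrightarrow> y \<in> Dn n \<Longrightarrow> rint n x y \<in> Dn n"
  by (auto simp: mem_Dn_iff rint_def dmult_def dinv_def)

lemma lint_in_Dn: "x \<in> Dn n \<Longrightarrow> y \<in> Dn n \<Longrightarrow> lint n x y \<in> Dn n"
  by (auto simp: mem_Dn_iff lint_def dmult_def dinv_def)

lemma riv_eq_0_outside_Dn: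
  assumes "A \<subseteq> Dn n" "g \<notin> Dn n"
  shows "riv n A g = 0"
proof -
  have "{(x, y). x \<in> A \<and> y \<in> A \<and> rint n x y = g} = {}"
    using assms rint_in_Dn by blast
  then show ?thesis unfolding riv_def by (metis card.empty)
qed

lemma liv_eq_0_outside_Dn:
  assumes "A \<subseteq> Dn n" "g \<notin> Dn n"
  shows "liv n A g = 0"
proof -
  have "{(x, y). x \<in> A \<and> y \<in> A \<and> lint n x y = g} = {}"
    using assms lint_in_Dn by blast
  then show ?thesis unfolding liv_def by (metis card.empty)
qed

definition anti_involution :: "nat \<Rightarrow> (int \<times> int \<Rightarrow> int \<times> int) \<Rightarrow> bool" where
  "anti_involution n \<theta> \<longleftrightarrow>
     (\<forall>x \<in> Dn n. \<theta> x \<in> Dn n \<and> \<theta> (\<theta> x) = x) \<and>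
     (\<forall>x \<in> Dn n. \<forall>y \<in> Dn n. lint n (\<theta> x) (\<theta> y) = \<theta> (rint n x y))"

lemma anti_involution_image_Dn:
  assumes "anti_involution n \<theta>"
  shows "\<theta> ` Dn n = Dn n"
proof -
  have "\<theta> x \<in> Dn n" "\<theta> (\<theta> x) = x" if "x \<in> Dn n" for x
    using assms that unfolding anti_involution_def by auto
  then show ?thesis
    by (metis image_subset_iff image_eqI subsetI subset_antisym)
qed

lemma riv_eq_liv_anti_involution:
  assumes \<theta>: "anti_involution n \<theta>" and A: "A \<subseteq> Dn n" "\<forall>x \<in> A. \<theta> x \<in> A"
    and g: "g \<in> Dn n"
  shows "riv n A g = liv n A (\<theta> g)"
proof -
  have inv: "\<theta> (\<theta> x) = x" if "x \<in> A" for x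
    using \<theta> A(1) that unfolding anti_involution_def by blast
  have anti: "lint n (\<theta> x) (\<theta> y) = \<theta> (rint n x y)" if "x \<in> A" "y \<in> A" for x y
    using \<theta> A(1) that unfolding anti_involution_def by blast
  have inj: "a = b" if "\<theta> a = \<theta> b" "a \<in> Dn n" "b \<in> Dn n" for a b
    using \<theta> that unfolding anti_involution_def by metis
  let ?S = "{(x, y). x \<in> A \<and> y \<in> A \<and> rint n x y = g}"
  let ?T = "{(x, y). x \<in> A \<and> y \<in> A \<and> lint n x y = \<theta> g}"
  have T_to_S: "(\<theta> x, \<theta> y) \<in> ?S" if "(x, y) \<in> ?T" for x y
  proof -
    have xy: "x \<in> A" "y \<in> A" "\<theta> x \<in> A" "\<theta> y \<in> A" "lint n x y = \<theta> g"
      using that A(2) by auto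
    then have "\<theta> (rint n (\<theta> x) (\<theta> y)) = \<theta> g"
      using anti[of "\<theta> x" "\<theta> y"] inv by simp
    moreover have "rint n (\<theta> x) (\<theta> y) \<in> Dn n"
      using rint_in_Dn A(1) xy by blast
    ultimately show ?thesis
      using inj g xy by blast
  qed
  have "bij_betw (map_prod \<theta> \<theta>) ?S ?T"
  proof (rule bij_betw_byWitness[where f' = "map_prod \<theta> \<theta>"])
    show "\<forall>p \<in> ?S. map_prod \<theta> \<theta> (map_prod \<theta> \<theta> p) = p"
      "\<forall>p \<in> ?T. map_prod \<theta> \<theta> (map_prod \<theta> \<theta> p) = p"
      using inv by auto
    show "map_prod \<theta> \<theta> ` ?S \<subseteq> ?T"
      using A(2) anti by auto
    show "map_prod \<theta> \<theta> ` ?T \<subseteq> ?S"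
      using T_to_S by auto
  qed
  then show ?thesis
    unfolding riv_def liv_def by (rule bij_betw_same_card)
qed

lemma right_homometric_iff_left_homometric:
  assumes \<theta>: "anti_involution n \<theta>"
    and A: "A \<subseteq> Dn n" "\<forall>x \<in> A. \<theta> x \<in> A"
    and B: "B \<subseteq> Dn n" "\<forall>x \<in> B. \<theta> x \<in> B"
  shows "right_homometric n A B \<longleftrightarrow> left_homometric n A B"
proof -
  have "right_homometric n A B \<longleftrightarrow> (\<forall>g \<in> Dn n. riv n A g = riv n B g)"
    unfolding right_homometric_def fun_eq_iff
    by (metis riv_eq_0_outside_Dn A(1) B(1))
  also have "\<dots> \<longleftrightarrow> (\<forall>g \<in> Dn n. liv n A (\<theta> g) = liv n B (\<theta> g))"
    using riv_eq_liv_anti_involution[OF \<theta>] A B by simp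
  also have "\<dots> \<longleftrightarrow> (\<forall>g \<in> \<theta> ` Dn n. liv n A g = liv n B g)"
    by (simp only: ball_simps(9))
  also have "\<dots> \<longleftrightarrow> left_homometric n A B"
    unfolding left_homometric_def fun_eq_iff anti_involution_image_Dn[OF \<theta>]
    by (metis liv_eq_0_outside_Dn A(1) B(1))
  finally show ?thesis .
qed

lemma anti_involution_dinv: "anti_involution n (dinv n)"
  unfolding anti_involution_def
  by (auto simp: mem_Dn_iff lint_def rint_def dmult_def dinv_def mod_simps algebra_simps)

text \<open>The map x \<mapsto> s x\<inverse> s for the reflection s = (0, -1): it fixes the rotations
  (k, 1) and sends the reflection (k, -1) to (-k, -1).\<close>
definition dflip :: "nat \<Rightarrow> int \<times> int \<Rightarrow> int \<times> int" where
  "dflip n x = ((snd x * fst x) mod int n, snd x)"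

lemma anti_involution_dflip: "anti_involution n (dflip n)"
  unfolding anti_involution_def
  by (auto simp: mem_Dn_iff lint_def rint_def dmult_def dinv_def dflip_def mod_simps algebra_simps)

lemma dinv_closed_if_I0_plus_part:
  assumes A: "A \<subseteq> Dn n" and sym: "I0 n (plus_part A) = plus_part A" and x: "x \<in> A"
  shows "dinv n x \<in> A"
proof -
  obtain k e where k: "x = (k, e)" "0 \<le> k" "k < int n" "e = 1 \<or> e = -1"
    using A x by (cases x) (auto simp: mem_Dn_iff)
  show ?thesis
  proof (cases "e = 1")
    case True
    then have "(- k) mod int n \<in> I0 n (plus_part A)"
      using k x unfolding I0_def plus_part_def by auto
    then show ?thesis using sym True k by (simp add: dinv_def plus_part_def)
  next
    case False
    then show ?thesis using k x by (simp add: dinv_def)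
  qed
qed

lemma dflip_closed_if_I0_minus_part:
  assumes A: "A \<subseteq> Dn n" and sym: "I0 n (minus_part A) = minus_part A" and x: "x \<in> A"
  shows "dflip n x \<in> A"
proof -
  obtain k e where k: "x = (k, e)" "0 \<le> k" "k < int n" "e = 1 \<or> e = -1"
    using A x by (cases x) (auto simp: mem_Dn_iff)
  show ?thesis
  proof (cases "e = 1")
    case True
    then show ?thesis using k x by (simp add: dflip_def)
  next
    case False
    then have "(- k) mod int n \<in> I0 n (minus_part A)"
      using k x unfolding I0_def minus_part_def by auto
    then show ?thesis using sym False k by (simp add: dflip_def minus_part_def)
  qed
qed

theorem mainTheorem9:
  fixes n :: nat and A B :: "(int \<times> int) set"
  assumes "n \<ge> 1"
    and "A \<subseteq> Dn n" and "B \<subseteq> Dn n"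
    and "(I0 n (plus_part A) = plus_part A \<and> I0 n (plus_part B) = plus_part B)
       \<or> (I0 n (minus_part A) = minus_part A \<and> I0 n (minus_part B) = minus_part B)"
  shows "right_homometric n A B \<longleftrightarrow> left_homometric n A B"
  using assms(4)
proof
  assume "I0 n (plus_part A) = plus_part A \<and> I0 n (plus_part B) = plus_part B"
  then show ?thesis
    by (intro right_homometric_iff_left_homometric[OF anti_involution_dinv] assms(2,3) ballI
        dinv_closed_if_I0_plus_part) auto
next
  assume "I0 n (minus_part A) = minus_part A \<and> I0 n (minus_part B) = minus_part B"
  then show ?thesis
    by (intro right_homometric_iff_left_homometric[OF anti_involution_dflip] assms(2,3) ballI
        dflip_closed_if_I0_minus_part) auto
qed

end
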